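(* Let the parent function on $Q_1\setminus\{o\}$ be defined by the rule below, and for $p\in Q_1$ let $R(p)$ be the set consisting of $p$, its parent, the parent of its parent, and so on until $o$ is reached. Then for every $p\in Q_1$, $R(p)$ has error less than $1.5$ in the $L_\infty$ metric, i.e. every $v\in R(p)$ has $L_\infty$ distance less than $1.5$ from the Euclidean segment $\overline{op}$. Parent rule, applied to each $p\in Q_1\setminus\{o\}$ (first applicable case): (1) if $p_x\le 1$ and $p\neq(1,0)$, the parent is $p^\downarrow$; (2) else if $p_y\le 1$, the parent is $p^\leftarrow$; (3) else if $p_y=2$ and $D(p)$ is a power of $2$, the parent is $p^\downarrow$; (4) else if $D(p)-1$ is a power of $2$, the parent is whichever of $p^\downarrow,p^\leftarrow$ has odd $x$-coordinate; (5) otherwise, let $Z_i^j$ be the zone containing $p$, and the parent is whichever of $p^\downarrow,p^\leftarrow$ is closer to the point $\mathrm{Mid}(i,j,D(p)-1)$, ties broken arbitrarily.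
   Context: Let $o=(0,0)$ and $Q_1=\{p\in\mathbb{Z}^2: p_x\ge0,p_y\ge0\}$. For $p\in\mathbb{Z}^2$ let $D(p)=p_x+p_y$ (the diagonal of $p$), $p^\leftarrow=(p_x-1,p_y)$, $p^\downarrow=(p_x,p_y-1)$. For a point $q\ne o$ in the closed first quadrant let $M(q)=q_y/q_x$ if $q_x>0$ and $M(q)=\infty$ otherwise, and let $\ell(q)$ be the Euclidean line through $o$ and $q$. A point $r$ is "below $\ell(q)$" if $M(r)\le M(q)$ and "above $\ell(q)$" if $M(r)>M(q)$. For integers $i\ge2$ and $1\le j\le 2^i-1$ let $v_i^j=(j,2^i-j)$. For $1\le j\le 2^i-2$, the zone $Z_i^j$ is the set of all $r\in\mathbb{R}^2$ in the first quadrant with $2^i<r_x+r_y\le 2^{i+1}$, $r$ below $\ell(v_i^j)$ and $r$ above $\ell(v_i^{j+1})$. For a real $d$ with $2^i<d<2^{i+1}$, $\mathrm{Mid}(i,j,d)$ is the point on the line $x+y=d$ whose $L_\infty$ distances to $\ell(v_i^j)$ and $\ell(v_i^{j+1})$ are equal (the midpoint of the two intersection points of these lines with $x+y=d$). "Closer" in case (5) refers to $L_\infty$ distance. (Every point reaching case (5) lies in exactly one zone.) *)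

theory Defs
  imports Complex_Main "HOL-Library.Extended_Real"
begin

type_synonym pt = "int \<times> int"

definition orig :: pt where "orig = (0, 0)"

definition Q1 :: "pt set" where "Q1 = {p. fst p \<ge> 0 \<and> snd p \<ge> 0}"

definition diag :: "pt \<Rightarrow> int" where "diag p = fst p + snd p"

definition left_of :: "pt \<Rightarrow> pt" where "left_of p = (fst p - 1, snd p)"
definition down_of :: "pt \<Rightarrow> pt" where "down_of p = (fst p, snd p - 1)"

definition is_pow2 :: "int \<Rightarrow> bool" where "is_pow2 n \<longleftrightarrow> (\<exists>k::nat. n = 2 ^ k)"

definition slope :: "real \<times> real \<Rightarrow> ereal" where
  "slope q = (if fst q > 0 then ereal (snd q / fst q) else \<infinity>)"

definition below_line :: "real \<times> real \<Rightarrow> real \<times> real \<Rightarrow> bool" where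
  "below_line r q \<longleftrightarrow> slope r \<le> slope q"
definition above_line :: "real \<times> real \<Rightarrow> real \<times> real \<Rightarrow> bool" where
  "above_line r q \<longleftrightarrow> slope r > slope q"

definition vij :: "nat \<Rightarrow> int \<Rightarrow> real \<times> real" where
  "vij i j = (real_of_int j, 2 ^ i - real_of_int j)"

definition zone :: "nat \<Rightarrow> int \<Rightarrow> (real \<times> real) set" where
  "zone i j = {r. fst r \<ge> 0 \<and> snd r \<ge> 0 \<and> 2 ^ i < fst r + snd r \<and> fst r + snd r \<le> 2 ^ (i + 1)
                 \<and> below_line r (vij i j) \<and> above_line r (vij i (j + 1))}"

text \<open>Intersection of the line through o and v (with v in the open first quadrant) with x + y = d.\<close>
definition diag_inter :: "real \<times> real \<Rightarrow> real \<Rightarrow> real \<times> real" where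
  "diag_inter v d = (d * fst v / (fst v + snd v), d * snd v / (fst v + snd v))"

definition Mid :: "nat \<Rightarrow> int \<Rightarrow> real \<Rightarrow> real \<times> real" where
  "Mid i j d = (let a = diag_inter (vij i j) d; b = diag_inter (vij i (j + 1)) d
                in ((fst a + fst b) / 2, (snd a + snd b) / 2))"

definition to_real :: "pt \<Rightarrow> real \<times> real" where
  "to_real p = (real_of_int (fst p), real_of_int (snd p))"

definition linf :: "real \<times> real \<Rightarrow> real \<times> real \<Rightarrow> real" where
  "linf a b = max \<bar>fst a - fst b\<bar> \<bar>snd a - snd b\<bar>"

text \<open>The parent rule; in case (5) ties are broken arbitrarily, so the rule is a relation
  that a parent function must satisfy at every p in Q1 - {o}.\<close>
definition parent_ok :: "pt \<Rightarrow> pt \<Rightarrow> bool" where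
  "parent_ok p q \<longleftrightarrow>
    (if fst p \<le> 1 \<and> p \<noteq> (1, 0) then q = down_of p
     else if snd p \<le> 1 then q = left_of p
     else if snd p = 2 \<and> is_pow2 (diag p) then q = down_of p
     else if is_pow2 (diag p - 1) then
       q \<in> {down_of p, left_of p} \<and> odd (fst q)
     else
       q \<in> {down_of p, left_of p} \<and>
       (\<forall>i j. 2 \<le> i \<longrightarrow> 1 \<le> j \<longrightarrow> j \<le> 2 ^ i - 2 \<longrightarrow> to_real p \<in> zone i j \<longrightarrow>
          (\<forall>q' \<in> {down_of p, left_of p}.
             linf (to_real q) (Mid i j (real_of_int (diag p - 1)))
               \<le> linf (to_real q') (Mid i j (real_of_int (diag p - 1))))))"

definition valid_parent :: "(pt \<Rightarrow> pt) \<Rightarrow> bool" where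
  "valid_parent par \<longleftrightarrow> (\<forall>p \<in> Q1 - {orig}. parent_ok p (par p))"

definition Rset :: "(pt \<Rightarrow> pt) \<Rightarrow> pt \<Rightarrow> pt set" where
  "Rset par p = {(par ^^ k) p | k. \<forall>m < k. (par ^^ m) p \<noteq> orig}"

definition seg_dist :: "pt \<Rightarrow> pt \<Rightarrow> real" where
  "seg_dist v p = (INF t \<in> {0..1::real}. linf (to_real v) (t * real_of_int (fst p), t * real_of_int (snd p)))"

end

theory Submission
  imports Defs
begin

(* Write a = p_x / D(p). The point of the segment op on the diagonal of a lattice point v is
   (D(v) a, D(v) (1 - a)), so the L-infinity distance from v to the segment is at most
   |v_x - D(v) a|, and it suffices to keep this horizontal offset below 3/2 along R(p).

   Near the axes the ancestry runs along the rows and columns 0 and 1, where this is a direct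
   computation. Otherwise p lies in a zone Z_i^j and, by case (5), its ancestry moves down one
   diagonal at a time while staying within 1/2 of the bisector of the zone or between the
   bisector and l(p). This invariant keeps the ancestry inside the zone, where l(p) and the
   bisector are less than 1 apart horizontally. On the diagonal 2^i + 1 the ancestry reaches
   (j + 1, 2^i - j), whose parent, by case (4), is a point of the diagonal 2^i with odd
   x-coordinate and offset at most 1. Such points are handled by induction on i: the same
   argument applies to them one level down, with the bisector in place of l(p). *)

lemma not_pow2_between:
  assumes "2 ^ i < z" "z < 2 ^ (i + 1)"
  shows "\<not> is_pow2 z"
proof
  assume "is_pow2 z"
  then obtain k :: nat where z: "z = 2 ^ k" unfolding is_pow2_def by auto
  have "i < k" using assms(1) unfolding z by (subst (asm) power_strict_increasing_iff) auto
  moreover have "k < i + 1" using assms(2) unfolding z by (subst (asm) power_strict_increasing_iff) auto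
  ultimately show False by simp
qed

lemma ex_dyadic_level:
  fixes n :: int
  assumes "2 \<le> n"
  obtains i where "2 ^ i < n" "n \<le> 2 ^ (i + 1)"
proof -
  have "int (nat n) < int (2 ^ nat n)"
    using less_exp[of "nat n"] by (simp only: of_nat_less_iff)
  then have "\<exists>k. n \<le> 2 ^ k"
    using assms by (intro exI[of _ "nat n"]) simp
  then obtain k where k: "n \<le> 2 ^ k" "\<forall>m<k. \<not> n \<le> 2 ^ m"
    by (auto simp: exists_least_iff[of "\<lambda>k. n \<le> 2 ^ k"])
  then obtain i where "k = Suc i" using assms by (cases k) auto
  then show thesis using k by (intro that[of i]) auto
qed

lemma valid_parent_at:
  assumes "valid_parent par" "0 \<le> x" "0 \<le> y" "(x, y) \<noteq> (0, 0)"
  shows "parent_ok (x, y) (par (x, y))"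
  using assms unfolding valid_parent_def Q1_def orig_def by auto

lemma parent_column:
  assumes "valid_parent par" "0 \<le> x" "x \<le> 1" "1 \<le> y"
  shows "par (x, y) = (x, y - 1)"
  using valid_parent_at[OF assms(1), of x y] assms unfolding parent_ok_def down_of_def by auto

lemma parent_row:
  assumes "valid_parent par" "1 \<le> x" "0 \<le> y" "y \<le> 1" "(x, y) \<noteq> (1, 1)"
  shows "par (x, y) = (x - 1, y)"
  using valid_parent_at[OF assms(1), of x y] assms unfolding parent_ok_def left_of_def by auto

lemma parent_interior:
  assumes "valid_parent par" "2 \<le> x" "2 \<le> y"
  shows "par (x, y) \<in> {(x, y - 1), (x - 1, y)}"
  using valid_parent_at[OF assms(1), of x y] assms
  unfolding parent_ok_def down_of_def left_of_def by (auto split: if_splits)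

lemma parent_second_row_pow2:
  assumes "valid_parent par" "2 \<le> x" "is_pow2 (x + 2)"
  shows "par (x, 2) = (x, 1)"
  using valid_parent_at[OF assms(1), of x 2] assms unfolding parent_ok_def down_of_def diag_def by auto

lemma parent_odd_on_pow2_diag:
  assumes "valid_parent par" "2 \<le> x" "2 \<le> y" "\<not> (y = 2 \<and> is_pow2 (x + y))" "is_pow2 (x + y - 1)"
  shows "odd (fst (par (x, y)))"
  using valid_parent_at[OF assms(1), of x y] assms unfolding parent_ok_def diag_def by auto

lemma parent_step:
  assumes "valid_parent par" "w \<in> Q1" "w \<noteq> orig"
  shows "par w \<in> {down_of w, left_of w}" "par w \<in> Q1"
proof -
  obtain x y where w: "w = (x, y)" "0 \<le> x" "0 \<le> y" "(x, y) \<noteq> (0, 0)"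
    using assms(2,3) unfolding Q1_def orig_def by (cases w) auto
  consider "x \<le> 1" "1 \<le> y" | "y \<le> 1" "1 \<le> x" "(x, y) \<noteq> (1, 1)" | "2 \<le> x" "2 \<le> y"
    using w by fastforce
  then have "par w = (x, y - 1) \<and> 1 \<le> y \<or> par w = (x - 1, y) \<and> 1 \<le> x"
    using parent_column[OF assms(1)] parent_row[OF assms(1)] parent_interior[OF assms(1)] w
    by cases auto
  then show "par w \<in> {down_of w, left_of w}" "par w \<in> Q1"
    using w unfolding down_of_def left_of_def Q1_def by auto
qed

lemma Rset_parent:
  assumes "w \<noteq> orig"
  shows "Rset par w = insert w (Rset par (par w))"
proof -
  have shift: "(par ^^ m) (par w) = (par ^^ Suc m) w" for m
    by (simp add: funpow_swap1)
  have "(\<forall>m < Suc k. (par ^^ m) w \<noteq> orig) \<longleftrightarrow> (\<forall>m < k. (par ^^ m) (par w) \<noteq> orig)" for k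
    using assms unfolding shift by (auto simp: less_Suc_eq_0_disj simp del: funpow.simps)
  then have "Rset par (par w) = {(par ^^ Suc k) w | k. \<forall>m < Suc k. (par ^^ m) w \<noteq> orig}"
    unfolding Rset_def shift by simp
  also have "insert w \<dots> = Rset par w"
  proof (intro equalityI subsetI)
    fix v assume "v \<in> Rset par w"
    then obtain k where "v = (par ^^ k) w" "\<forall>m < k. (par ^^ m) w \<noteq> orig"
      unfolding Rset_def by blast
    then show "v \<in> insert w {(par ^^ Suc k) w | k. \<forall>m < Suc k. (par ^^ m) w \<noteq> orig}"
      by (cases k) auto
  next
    fix v assume "v \<in> insert w {(par ^^ Suc k) w | k. \<forall>m < Suc k. (par ^^ m) w \<noteq> orig}"
    moreover have "w = (par ^^ 0) w" by simp
    ultimately show "v \<in> Rset par w"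
      unfolding Rset_def by blast
  qed
  finally show ?thesis by simp
qed

lemma Rset_subset_closed:
  assumes "w \<in> S" "\<And>u. u \<in> S \<Longrightarrow> u \<noteq> orig \<Longrightarrow> par u \<in> S"
  shows "Rset par w \<subseteq> S"
proof
  fix v assume "v \<in> Rset par w"
  then obtain k where v: "v = (par ^^ k) w" and k: "\<forall>m < k. (par ^^ m) w \<noteq> orig"
    unfolding Rset_def by auto
  from k have "(par ^^ k) w \<in> S"
    by (induction k) (auto intro: assms)
  then show "v \<in> S" using v by simp
qed

lemma Rset_subset_box:
  assumes "valid_parent par" "p \<in> Q1"
  shows "Rset par p \<subseteq> {0..fst p} \<times> {0..snd p}"
proof (rule Rset_subset_closed)
  show "p \<in> {0..fst p} \<times> {0..snd p}" using assms(2) unfolding Q1_def by (cases p) auto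
next
  fix u assume u: "u \<in> {0..fst p} \<times> {0..snd p}" "u \<noteq> orig"
  then have "u \<in> Q1" unfolding Q1_def by auto
  then have "par u \<in> {down_of u, left_of u}" "par u \<in> Q1"
    using parent_step[OF assms(1)] u(2) by auto
  then show "par u \<in> {0..fst p} \<times> {0..snd p}"
    using u(1) unfolding down_of_def left_of_def Q1_def by auto
qed

(* The signed horizontal distance from w to the line x = a (x + y); for a = p_x / D(p)
   this line is l(p). *)
definition offset :: "real \<Rightarrow> pt \<Rightarrow> real" where
  "offset a w = real_of_int (fst w) - real_of_int (diag w) * a"

definition strip :: "real \<Rightarrow> pt set" where
  "strip a = {w. \<bar>offset a w\<bar> < 3 / 2}"

lemma offset_pair: "offset a (x, y) = real_of_int x - (real_of_int x + real_of_int y) * a"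
  unfolding offset_def diag_def by simp

lemma offset_self: "diag w \<noteq> 0 \<Longrightarrow> offset (real_of_int (fst w) / real_of_int (diag w)) w = 0"
  unfolding offset_def by simp

lemma orig_in_strip: "orig \<in> strip a"
  unfolding strip_def offset_def orig_def diag_def by simp

lemma offset_down: "offset a (down_of w) = offset a w + a"
  unfolding offset_def down_of_def diag_def by (simp add: algebra_simps)

lemma offset_left: "offset a (left_of w) = offset a w + a - 1"
  unfolding offset_def left_of_def diag_def by (simp add: algebra_simps)

lemma seg_dist_le_offset:
  assumes "p \<in> Q1" "v \<in> {0..fst p} \<times> {0..snd p}"
  shows "seg_dist v p \<le> \<bar>offset (real_of_int (fst p) / real_of_int (diag p)) v\<bar>"
proof -
  obtain x y u w where p: "p = (x, y)" and v: "v = (u, w)" by (cases p, cases v)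
  have bounds: "0 \<le> u" "u \<le> x" "0 \<le> w" "w \<le> y" using assms(2) p v by auto
  define t where "t = real_of_int (u + w) / real_of_int (x + y)"
  have t: "t \<in> {0..1}" unfolding t_def using bounds by (auto simp: divide_simps)
  have "real_of_int u - t * real_of_int x = offset (real_of_int (fst p) / real_of_int (diag p)) v"
    unfolding t_def p v offset_pair diag_def by (simp add: field_simps)
  moreover have "real_of_int w - t * real_of_int y = - offset (real_of_int (fst p) / real_of_int (diag p)) v"
  proof (cases "x + y = 0")
    case True
    then have "u = 0" "w = 0" using bounds by auto
    then show ?thesis unfolding t_def p v offset_pair by simp
  next
    case False then show ?thesis
      unfolding t_def p v offset_pair diag_def by (simp add: field_simps)
  qed
  ultimately have "linf (to_real v) (t * real_of_int (fst p), t * real_of_int (snd p))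
      = \<bar>offset (real_of_int (fst p) / real_of_int (diag p)) v\<bar>"
    unfolding linf_def to_real_def p v by simp
  moreover have "seg_dist v p \<le> linf (to_real v) (t * real_of_int (fst p), t * real_of_int (snd p))"
    unfolding seg_dist_def by (rule cINF_lower[OF bdd_belowI[of _ 0] t]) (auto simp: linf_def)
  ultimately show ?thesis by simp
qed

lemma Rset_column_one_strip:
  assumes valid: "valid_parent par" and "0 \<le> y" "\<bar>offset a (1, y)\<bar> \<le> 1"
  shows "Rset par (1, y) \<subseteq> strip a"
proof -
  have ya: "0 \<le> (real_of_int y + 1) * a" "(real_of_int y + 1) * a \<le> 2"
    using assms(3) unfolding offset_pair abs_le_iff by (simp_all add: algebra_simps)
  then have a: "0 \<le> a" using assms(2) by (simp add: zero_le_mult_iff)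
  have "Rset par (1, y) \<subseteq> insert orig ({1} \<times> {0..y})"
  proof (rule Rset_subset_closed)
    fix u assume "u \<in> insert orig ({1} \<times> {0..y})" "u \<noteq> orig"
    then obtain v where u: "u = (1, v)" "0 \<le> v" "v \<le> y" by auto
    show "par u \<in> insert orig ({1} \<times> {0..y})"
    proof (cases "v = 0")
      case True then show ?thesis using parent_row[OF valid, of 1 0] u by (simp add: orig_def)
    next
      case False then show ?thesis using parent_column[OF valid, of 1 v] u by auto
    qed
  qed (use assms in auto)
  also have "\<dots> \<subseteq> strip a"
  proof
    fix u assume "u \<in> insert orig ({1} \<times> {0..y})"
    then consider "u = orig" | v where "u = (1, v)" "0 \<le> v" "v \<le> y" by auto
    then show "u \<in> strip a"
    proof cases
      case (2 v)
      have "(real_of_int v + 1) * a \<le> (real_of_int y + 1) * a"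
        using 2 a by (intro mult_right_mono) auto
      moreover have "0 \<le> (real_of_int v + 1) * a" using 2 a by simp
      moreover have "offset a u = 1 - (real_of_int v + 1) * a"
        using 2 by (simp add: offset_pair algebra_simps)
      ultimately show ?thesis
        using ya unfolding strip_def mem_Collect_eq abs_less_iff by (intro conjI) linarith+
    qed (simp add: orig_in_strip)
  qed
  finally show ?thesis .
qed

lemma Rset_row_one_strip:
  assumes valid: "valid_parent par" and "1 \<le> x" "\<bar>offset a (x, 1)\<bar> \<le> 1"
  shows "Rset par (x, 1) \<subseteq> strip a"
proof -
  have xa: "0 \<le> (real_of_int x + 1) * (1 - a)" "(real_of_int x + 1) * (1 - a) \<le> 2"
    using assms(3) unfolding offset_pair abs_le_iff by (simp_all add: algebra_simps)
  then have a: "a \<le> 1" using assms(2) by (simp add: zero_le_mult_iff)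
  have "Rset par (x, 1) \<subseteq> {orig, (1, 0)} \<union> {1..x} \<times> {1}"
  proof (rule Rset_subset_closed)
    fix u assume "u \<in> {orig, (1, 0)} \<union> {1..x} \<times> {1}" "u \<noteq> orig"
    then consider "u = (1, 0)" | "u = (1, 1)" | v where "u = (v, 1)" "2 \<le> v" "v \<le> x"
      by (fastforce simp: orig_def)
    then show "par u \<in> {orig, (1, 0)} \<union> {1..x} \<times> {1}"
      by cases (use parent_row[OF valid] parent_column[OF valid] in \<open>auto simp: orig_def\<close>)
  qed (use assms in auto)
  also have "\<dots> \<subseteq> strip a"
  proof
    fix u assume "u \<in> {orig, (1, 0)} \<union> {1..x} \<times> {1}"
    then consider "u = orig" | "u = (1, 0)" | v where "u = (v, 1)" "1 \<le> v" "v \<le> x" by auto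
    then show "u \<in> strip a"
    proof cases
      case (3 v)
      have "(real_of_int v + 1) * (1 - a) \<le> (real_of_int x + 1) * (1 - a)"
        using 3 a by (intro mult_right_mono) auto
      moreover have "0 \<le> (real_of_int v + 1) * (1 - a)" using 3 a by simp
      moreover have "offset a u = (real_of_int v + 1) * (1 - a) - 1"
        using 3 by (simp add: offset_pair algebra_simps)
      ultimately show ?thesis
        using xa unfolding strip_def mem_Collect_eq abs_less_iff by (intro conjI) linarith+
    next
      case 2
      have "2 * (1 - a) \<le> (real_of_int x + 1) * (1 - a)"
        using assms(2) a by (intro mult_right_mono) auto
      then have "2 * (1 - a) \<le> 2" using xa(2) by (rule order_trans)
      then have "0 \<le> a" by simp
      moreover have "offset a u = 1 - a" using 2 by (simp add: offset_pair)
      ultimately show ?thesis using a unfolding strip_def by simp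
    qed (simp add: orig_in_strip)
  qed
  finally show ?thesis .
qed

(* The bisector of the zone Z_i^j, through all the points Mid i j d (see linf_Mid). *)
definition zone_mid :: "nat \<Rightarrow> int \<Rightarrow> real" where
  "zone_mid i j = (2 * real_of_int j + 1) / 2 ^ (i + 1)"

(* The cone of Z_i^j, cross-multiplied: on or below l(v_i^j) and above l(v_i^(j+1)). *)
definition sector :: "nat \<Rightarrow> int \<Rightarrow> pt \<Rightarrow> bool" where
  "sector i j w \<longleftrightarrow> diag w * j \<le> fst w * 2 ^ i \<and> fst w * 2 ^ i < diag w * (j + 1)"

(* The invariant that case (5) keeps inside a zone with bisector c. *)
definition tracks :: "real \<Rightarrow> real \<Rightarrow> pt \<Rightarrow> bool" where
  "tracks b c w \<longleftrightarrow>
     \<bar>offset c w\<bar> \<le> 1 / 2 \<or> offset b w \<le> 0 \<and> 0 \<le> offset c w \<or> offset c w \<le> 0 \<and> 0 \<le> offset b w"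

lemma tracks_step:
  assumes "0 < c" "c < 1" "0 \<le> b" "b \<le> 1"
    and q: "q \<in> {down_of w, left_of w}"
    and closer: "\<forall>q' \<in> {down_of w, left_of w}. \<bar>offset c q\<bar> \<le> \<bar>offset c q'\<bar>"
    and "tracks b c w"
  shows "tracks b c q"
proof -
  have vs_down: "\<bar>offset c q\<bar> \<le> \<bar>offset c w + c\<bar>"
    and vs_left: "\<bar>offset c q\<bar> \<le> \<bar>offset c w + c - 1\<bar>"
    using closer by (auto simp: offset_down offset_left)
  from q consider
      "offset c q = offset c w + c" "offset b q = offset b w + b"
    | "offset c q = offset c w + c - 1" "offset b q = offset b w + b - 1"
    by (auto simp: offset_down offset_left)
  then show ?thesis
    using assms(1-4) \<open>tracks b c w\<close> vs_down vs_left unfolding tracks_def by cases (auto simp: abs_if split: if_splits)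
qed

lemma tracks_in_strip:
  assumes "tracks b c w" "b = a \<or> b = c" "\<bar>offset a w - offset c w\<bar> < 1"
  shows "w \<in> strip a"
  using assms unfolding tracks_def strip_def by (auto simp: abs_if split: if_splits)

lemma tracks_sector:
  assumes "tracks b (zone_mid i j) w" "real_of_int j \<le> 2 ^ i * b" "2 ^ i * b < real_of_int j + 1"
    and "2 ^ i < diag w"
  shows "sector i j w"
proof -
  define K :: real where "K = 2 ^ i"
  define D where "D = real_of_int (diag w)"
  have K: "0 < K" unfolding K_def by simp
  have "real_of_int (2 ^ i) < real_of_int (diag w)" using assms(4) by (simp only: of_int_less_iff)
  then have D: "K < D" unfolding K_def D_def by simp
  have lo: "offset (j / K) w = offset (zone_mid i j) w + D / (2 * K)"
    and hi: "offset ((j + 1) / K) w = offset (zone_mid i j) w - D / (2 * K)"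
    unfolding offset_def zone_mid_def K_def D_def by (simp_all add: field_simps)
  have le: "j / K \<le> b" and lt: "b < (j + 1) / K"
    using assms(2,3) K unfolding K_def[symmetric] by (simp_all add: field_simps)
  have "D * (j / K) \<le> D * b" by (rule mult_left_mono[OF le]) (use K D in linarith)
  moreover have "D * b < D * ((j + 1) / K)" by (rule mult_strict_left_mono[OF lt]) (use K D in linarith)
  ultimately have "offset b w \<le> offset (j / K) w" "offset ((j + 1) / K) w < offset b w"
    unfolding offset_def D_def by simp_all
  moreover have "1 / 2 < D / (2 * K)" using K D by (simp add: field_simps)
  ultimately have "0 \<le> offset (j / K) w \<and> offset ((j + 1) / K) w < 0"
    using assms(1) lo hi unfolding tracks_def abs_le_iff by (elim disjE conjE; intro conjI; linarith)
  then have "D * j \<le> real_of_int (fst w) * K" "real_of_int (fst w) * K < D * (j + 1)"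
    using K unfolding offset_def D_def by (simp_all add: field_simps)
  then have "real_of_int (diag w * j) \<le> real_of_int (fst w * 2 ^ i)"
    "real_of_int (fst w * 2 ^ i) < real_of_int (diag w * (j + 1))"
    unfolding D_def K_def by simp_all
  then show ?thesis unfolding sector_def of_int_le_iff of_int_less_iff by simp
qed

lemma sector_first_diag:
  assumes "sector i j w" "diag w = 2 ^ i + 1" "1 \<le> j" "j \<le> 2 ^ i - 2"
  shows "w = (j + 1, 2 ^ i - j)"
proof -
  define K :: int where "K = 2 ^ i"
  have K: "0 < K" unfolding K_def by simp
  have s: "(K + 1) * j \<le> fst w * K" "fst w * K < (K + 1) * (j + 1)"
    using assms(1,2) unfolding sector_def K_def[symmetric] by simp_all
  have e1: "(K + 1) * j = j * K + j" and e2: "(K + 1) * (j + 1) = (j + 2) * K - K + j + 1"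
    by (simp_all add: algebra_simps)
  have "j \<le> K - 2" unfolding K_def using assms(4) by simp
  then have "j * K < fst w * K" "fst w * K < (j + 2) * K"
    using s e1 e2 assms(3) by linarith+
  then have "j < fst w" "fst w < j + 2" using K by simp_all
  then have "fst w = j + 1" by simp
  then show ?thesis using assms(2) unfolding diag_def by (cases w) simp
qed

lemma sector_in_zone:
  assumes "sector i j w" "1 \<le> j" "0 \<le> snd w" "2 ^ i < diag w" "diag w \<le> 2 ^ (i + 1)"
  shows "to_real w \<in> zone i j"
proof -
  obtain x y where w: "w = (x, y)" by (cases w)
  define K :: real where "K = 2 ^ i"
  have K: "0 < K" unfolding K_def by simp
  have "real_of_int ((x + y) * j) \<le> real_of_int (x * 2 ^ i)"
    "real_of_int (x * 2 ^ i) < real_of_int ((x + y) * (j + 1))"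
    using assms(1) w unfolding sector_def diag_def of_int_le_iff of_int_less_iff by simp_all
  then have lo: "(real_of_int x + real_of_int y) * real_of_int j \<le> real_of_int x * K"
    and hi: "real_of_int x * K < (real_of_int x + real_of_int y) * (real_of_int j + 1)"
    unfolding K_def by simp_all
  have "real_of_int (2 ^ i) < real_of_int (x + y)" "real_of_int (x + y) \<le> real_of_int (2 ^ (i + 1))"
    using assms(4,5) w unfolding diag_def of_int_le_iff of_int_less_iff by simp_all
  then have D: "2 ^ i < real_of_int x + real_of_int y" "real_of_int x + real_of_int y \<le> 2 ^ (i + 1)"
    by simp_all
  have j: "0 < real_of_int j" using assms(2) by simp
  have "0 < (real_of_int x + real_of_int y) * real_of_int j"
    using D j by (intro mult_pos_pos) (auto intro: less_trans[OF zero_less_power[of 2 i]])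
  then have "0 < real_of_int x * K" using lo by linarith
  then have x: "0 < real_of_int x" using K by (simp add: zero_less_mult_iff)
  have "y / x \<le> (K - j) / j"
    using lo x j by (simp add: field_simps)
  moreover have "(K - (j + 1)) / (j + 1) < y / x"
    using hi x j by (simp add: field_simps)
  ultimately show ?thesis
    using x D assms(2,3) w unfolding zone_def below_line_def above_line_def slope_def vij_def to_real_def K_def
    by simp
qed

lemma linf_Mid:
  assumes "diag q = d"
  shows "linf (to_real q) (Mid i j (real_of_int d)) = \<bar>offset (zone_mid i j) q\<bar>"
proof -
  have "Mid i j (real_of_int d) = (real_of_int d * zone_mid i j, real_of_int d - real_of_int d * zone_mid i j)"
    unfolding Mid_def diag_inter_def vij_def zone_mid_def Let_def by (simp add: field_simps)
  moreover have "real_of_int (snd q) - (real_of_int d - real_of_int d * zone_mid i j) = - offset (zone_mid i j) q"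
    using assms unfolding offset_def diag_def by simp
  ultimately show ?thesis unfolding linf_def to_real_def offset_def using assms by simp
qed

lemma sector_case5:
  assumes "1 \<le> j" "j \<le> 2 ^ i - 2" "2 ^ i + 1 < x + y" "x + y \<le> 2 ^ (i + 1)" "sector i j (x, y)"
  shows "2 \<le> x" "2 \<le> y" "\<not> (y = 2 \<and> is_pow2 (x + y))" "\<not> is_pow2 (x + y - 1)"
proof -
  define K :: int where "K = 2 ^ i"
  have K: "0 < K" unfolding K_def by simp
  have s: "(x + y) * j \<le> x * K" "x * K < (x + y) * (j + 1)"
    using assms(5) unfolding sector_def diag_def K_def by simp_all
  have DK: "K + 1 < x + y" "x + y \<le> 2 * K"
    using assms(3,4) unfolding K_def by simp_all
  have "K * j < (x + y) * j" using DK assms(1) by (intro mult_strict_right_mono) auto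
  then have "j * K < x * K" using s(1) by (simp add: mult.commute)
  then show x2: "2 \<le> x" using K assms(1) by simp
  have "(x + y) * 1 \<le> (x + y) * (K - j - 1)"
    using DK K assms(2) unfolding K_def by (intro mult_left_mono) auto
  then have "x + y \<le> (x + y) * (K - j - 1)" by simp
  also have "(x + y) * (K - j - 1) < y * K" using s(2) by (simp add: algebra_simps)
  finally have yK: "x + y < y * K" .
  then have "1 * K < y * K" using DK by linarith
  then show "2 \<le> y" using K by (simp only: mult_less_cancel_right) simp
  show "\<not> (y = 2 \<and> is_pow2 (x + y))"
  proof
    assume "y = 2 \<and> is_pow2 (x + y)"
    moreover from this have "x + y = 2 * K"
      using not_pow2_between[of i "x + y"] DK unfolding K_def by force
    ultimately show False using yK by simp
  qed
  show "\<not> is_pow2 (x + y - 1)"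
    using not_pow2_between[of i "x + y - 1"] DK unfolding K_def by simp
qed

lemma parent_toward_zone_mid:
  assumes valid: "valid_parent par" and i: "2 \<le> i" and j: "1 \<le> j" "j \<le> 2 ^ i - 2"
    and D: "2 ^ i + 1 < diag w" "diag w \<le> 2 ^ (i + 1)" and sec: "sector i j w"
  shows "par w \<in> {down_of w, left_of w}"
    and "\<forall>q \<in> {down_of w, left_of w}. \<bar>offset (zone_mid i j) (par w)\<bar> \<le> \<bar>offset (zone_mid i j) q\<bar>"
proof -
  obtain x y where w: "w = (x, y)" by (cases w)
  note case5 = sector_case5[OF j D[unfolded w diag_def fst_conv snd_conv] sec[unfolded w]]
  have zone: "to_real (x, y) \<in> zone i j"
    using sector_in_zone[OF sec j(1)] D case5(2) w by simp
  have "parent_ok (x, y) (par (x, y))" using valid_parent_at[OF valid] case5(1,2) by simp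
  then have par_mem: "par (x, y) \<in> {down_of (x, y), left_of (x, y)}"
    and closest: "\<forall>q \<in> {down_of (x, y), left_of (x, y)}.
      linf (to_real (par (x, y))) (Mid i j (real_of_int (diag (x, y) - 1)))
        \<le> linf (to_real q) (Mid i j (real_of_int (diag (x, y) - 1)))"
    using case5 i j zone unfolding parent_ok_def diag_def by auto
  then show "par w \<in> {down_of w, left_of w}" using w by simp
  have Mid_offset:
    "linf (to_real q) (Mid i j (real_of_int (diag (x, y) - 1))) = \<bar>offset (zone_mid i j) q\<bar>"
    if "q \<in> {down_of (x, y), left_of (x, y)}" for q
    by (rule linf_Mid) (use that in \<open>auto simp: down_of_def left_of_def diag_def\<close>)
  show "\<forall>q \<in> {down_of w, left_of w}. \<bar>offset (zone_mid i j) (par w)\<bar> \<le> \<bar>offset (zone_mid i j) q\<bar>"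
  proof
    fix q assume "q \<in> {down_of w, left_of w}"
    then have q: "q \<in> {down_of (x, y), left_of (x, y)}" using w by simp
    show "\<bar>offset (zone_mid i j) (par w)\<bar> \<le> \<bar>offset (zone_mid i j) q\<bar>"
      using closest[rule_format, OF q] unfolding Mid_offset[OF q] Mid_offset[OF par_mem] w .
  qed
qed

lemma tracks_parent:
  assumes valid: "valid_parent par" and i: "2 \<le> i" and j: "1 \<le> j" "j \<le> 2 ^ i - 2"
    and b: "real_of_int j \<le> 2 ^ i * b" "2 ^ i * b < real_of_int j + 1"
    and D: "2 ^ i + 1 < diag w" "diag w \<le> 2 ^ (i + 1)" and t: "tracks b (zone_mid i j) w"
  shows "diag (par w) = diag w - 1" "tracks b (zone_mid i j) (par w)"
proof -
  have "sector i j w" by (rule tracks_sector[OF t b]) (use D(1) in linarith)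
  note toward = parent_toward_zone_mid[OF valid i j D this]
  then show "diag (par w) = diag w - 1" unfolding down_of_def left_of_def diag_def by auto
  have "real_of_int j \<le> real_of_int (2 ^ i - 2)" using j(2) by (simp only: of_int_le_iff)
  then have jr: "1 \<le> real_of_int j" "real_of_int j + 2 \<le> 2 ^ i" using j(1) by simp_all
  have "0 < 2 * real_of_int j + 1" "2 * real_of_int j + 1 < 2 ^ (i + 1)" using jr by simp_all
  then have c: "0 < zone_mid i j" "zone_mid i j < 1" unfolding zone_mid_def by simp_all
  have pos: "(0::real) < 2 ^ i" by simp
  have "2 ^ i * 0 \<le> 2 ^ i * b" "2 ^ i * b \<le> 2 ^ i * 1" using b jr by linarith+
  then have "0 \<le> b" "b \<le> 1" unfolding mult_le_cancel_left_pos[OF pos] .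
  from tracks_step[OF c this toward t]
  show "tracks b (zone_mid i j) (par w)" .
qed

lemma offset_zone_mid_close:
  assumes "real_of_int j \<le> 2 ^ i * a" "2 ^ i * a \<le> real_of_int j + 1"
    and "2 ^ i < diag u" "diag u < 2 ^ (i + 1)"
  shows "\<bar>offset a u - offset (zone_mid i j) u\<bar> < 1"
proof -
  define K :: real where "K = 2 ^ i"
  define D where "D = real_of_int (diag u)"
  have K: "0 < K" unfolding K_def by simp
  have "real_of_int (2 ^ i) < D" "D < real_of_int (2 ^ (i + 1))"
    using assms(3,4) unfolding D_def of_int_less_iff by simp_all
  then have D: "K < D" "D < 2 * K" unfolding K_def by simp_all
  have "K * zone_mid i j = real_of_int j + 1 / 2"
    unfolding zone_mid_def K_def by (simp add: field_simps)
  then have "\<bar>K * zone_mid i j - K * a\<bar> \<le> 1 / 2"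
    unfolding abs_le_iff using assms(1,2) unfolding K_def by (intro conjI) linarith+
  moreover have "\<bar>K * zone_mid i j - K * a\<bar> = K * \<bar>zone_mid i j - a\<bar>"
    using K by (simp add: abs_mult flip: right_diff_distrib)
  ultimately have close: "\<bar>zone_mid i j - a\<bar> \<le> 1 / (2 * K)" using K by (simp add: field_simps)
  have "offset a u - offset (zone_mid i j) u = D * (zone_mid i j - a)"
    unfolding offset_def D_def by (simp add: algebra_simps)
  then have "\<bar>offset a u - offset (zone_mid i j) u\<bar> = D * \<bar>zone_mid i j - a\<bar>"
    using D K by (simp add: abs_mult)
  also have "\<dots> \<le> D * (1 / (2 * K))" using close D K by (intro mult_left_mono) auto
  also have "\<dots> < 1" using D K by (simp add: field_simps)
  finally show ?thesis .
qed

(* The possible parents of points of the diagonal 2^m + 1 under case (4). *)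
definition skeleton :: "nat \<Rightarrow> pt set" where
  "skeleton m = {w. diag w = 2 ^ m \<and> odd (fst w) \<and> 0 < fst w \<and> fst w < 2 ^ m}"

lemma parent_first_diag:
  assumes valid: "valid_parent par" and i: "2 \<le> i" and j: "1 \<le> j" "j \<le> 2 ^ i - 2"
  shows "par (j + 1, 2 ^ i - j) \<in> skeleton i" "fst (par (j + 1, 2 ^ i - j)) \<in> {j, j + 1}"
proof -
  have x2: "2 \<le> j + 1" and y2: "2 \<le> 2 ^ i - j" using j by auto
  have "(2::int) ^ 2 \<le> 2 ^ i" using i by (intro power_increasing) auto
  then have "\<not> is_pow2 (j + 1 + (2 ^ i - j))" by (intro not_pow2_between[of i]) auto
  moreover have "is_pow2 (j + 1 + (2 ^ i - j) - 1)" unfolding is_pow2_def by auto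
  ultimately have "odd (fst (par (j + 1, 2 ^ i - j)))"
    using parent_odd_on_pow2_diag[OF valid x2 y2] by simp
  moreover have "par (j + 1, 2 ^ i - j) \<in> {(j + 1, 2 ^ i - j - 1), (j, 2 ^ i - j)}"
    using parent_interior[OF valid x2 y2] by simp
  ultimately show "par (j + 1, 2 ^ i - j) \<in> skeleton i" "fst (par (j + 1, 2 ^ i - j)) \<in> {j, j + 1}"
    using j unfolding skeleton_def diag_def by auto
qed

lemma Rset_zone_strip:
  fixes a b :: real
  assumes valid: "valid_parent par" and i: "2 \<le> i" and j: "1 \<le> j" "j \<le> 2 ^ i - 2"
    and a: "real_of_int j \<le> 2 ^ i * a" "2 ^ i * a \<le> real_of_int j + 1"
    and b: "real_of_int j \<le> 2 ^ i * b" "2 ^ i * b < real_of_int j + 1" "b = a \<or> b = zone_mid i j"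
      (* b = zone_mid i j serves the odd points of the diagonal 2^(i+1), where 2^i a = j + 1 can occur *)
    and skeleton: "\<And>u. u \<in> skeleton i \<Longrightarrow> \<bar>offset a u\<bar> \<le> 1 \<Longrightarrow> Rset par u \<subseteq> strip a"
    and w: "2 ^ i < diag w" "diag w \<le> 2 ^ (i + 1)" "tracks b (zone_mid i j) w" "w \<in> strip a"
  shows "Rset par w \<subseteq> strip a"
proof -
  have induct: "Rset par w \<subseteq> strip a"
    if "diag w = 2 ^ i + 1 + int n" "diag w \<le> 2 ^ (i + 1)" "tracks b (zone_mid i j) w" "w \<in> strip a"
    for n w
    using that
  proof (induction n arbitrary: w)
    case 0
    have "sector i j w" using tracks_sector 0 b by simp
    then have w_eq: "w = (j + 1, 2 ^ i - j)" using sector_first_diag 0 j by simp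
    note q = parent_first_diag[OF valid i j, folded w_eq]
    have "\<bar>offset a (par w)\<bar> \<le> 1"
      using q a unfolding skeleton_def offset_def by auto
    then have "Rset par (par w) \<subseteq> strip a" using q(1) skeleton by simp
    moreover have "w \<noteq> orig" using w_eq j unfolding orig_def by simp
    ultimately show ?case using 0(4) by (simp add: Rset_parent)
  next
    case (Suc n)
    note step = tracks_parent[OF valid i j b(1,2) _ Suc.prems(2,3)]
    have d: "diag (par w) = 2 ^ i + 1 + int n" and t: "tracks b (zone_mid i j) (par w)"
      using step Suc.prems(1) by simp_all
    moreover have "2 ^ i < diag (par w)" "diag (par w) < 2 ^ (i + 1)"
      using d Suc.prems(1,2) by linarith+
    then have "par w \<in> strip a"
      using tracks_in_strip[OF t b(3) offset_zone_mid_close[OF a]] by blast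
    ultimately have "Rset par (par w) \<subseteq> strip a"
      using Suc.prems(1,2) by (intro Suc.IH) auto
    moreover have "(0::int) < 2 ^ i" by simp
    with Suc.prems(1) have "0 < diag w" by linarith
    then have "w \<noteq> orig" unfolding orig_def diag_def by auto
    ultimately show ?case using Suc.prems(4) by (simp add: Rset_parent)
  qed
  have "diag w = 2 ^ i + 1 + int (nat (diag w - 2 ^ i - 1))" using w(1) by simp
  then show ?thesis using induct w(2-4) by blast
qed

lemma Rset_skeleton_inner_strip:
  assumes valid: "valid_parent par" and k: "1 \<le> k" "k \<le> 2 ^ i - 2"
    and w: "w = (2 * k + 1, 2 ^ (i + 1) - (2 * k + 1))" and off: "\<bar>offset a w\<bar> \<le> 1"
    and skeleton: "\<And>u. u \<in> skeleton i \<Longrightarrow> \<bar>offset a u\<bar> \<le> 1 \<Longrightarrow> Rset par u \<subseteq> strip a"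
  shows "Rset par w \<subseteq> strip a"
proof -
  have "\<not> i \<le> 1"
  proof
    assume "i \<le> 1"
    then have "(2::int) ^ i \<le> 2 ^ 1" by (intro power_increasing) auto
    then show False using k by simp
  qed
  then have i: "2 \<le> i" by simp
  have "\<bar>2 * real_of_int k + 1 - 2 * 2 ^ i * a\<bar> \<le> 1"
    using off unfolding w offset_pair by simp
  then have a: "real_of_int k \<le> 2 ^ i * a" "2 ^ i * a \<le> real_of_int k + 1" by linarith+
  have Kc: "2 ^ i * zone_mid i k = real_of_int k + 1 / 2"
    unfolding zone_mid_def by (simp add: field_simps)
  have "offset (zone_mid i k) w = 0"
    unfolding w offset_pair zone_mid_def by (simp add: field_simps)
  then have tracks: "tracks (zone_mid i k) (zone_mid i k) w" unfolding tracks_def by simp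
  have strip: "w \<in> strip a" using off unfolding strip_def by simp
  have diag: "2 ^ i < diag w" "diag w \<le> 2 ^ (i + 1)" using w unfolding diag_def by simp_all
  show ?thesis
  proof (rule Rset_zone_strip[OF valid i k a _ _ _ skeleton diag tracks strip])
    show "real_of_int k \<le> 2 ^ i * zone_mid i k" "2 ^ i * zone_mid i k < real_of_int k + 1"
      unfolding Kc by simp_all
  qed simp_all
qed

lemma Rset_skeleton_strip:
  assumes valid: "valid_parent par"
  shows "w \<in> skeleton m \<Longrightarrow> \<bar>offset a w\<bar> \<le> 1 \<Longrightarrow> Rset par w \<subseteq> strip a"
proof (induction m arbitrary: w a)
  case 0
  then show ?case unfolding skeleton_def by auto
next
  case (Suc i)
  obtain x where w: "w = (x, 2 ^ Suc i - x)" and x: "odd x" "0 < x" "x < 2 ^ Suc i"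
    using Suc.prems(1) unfolding skeleton_def diag_def by (cases w) auto
  have "x = 1 \<or> x = 2 ^ Suc i - 1 \<or> 3 \<le> x \<and> x \<le> 2 ^ Suc i - 3"
  proof -
    obtain N :: int where N: "N = 2 ^ Suc i" by simp
    have "even N" unfolding N by simp
    then show ?thesis using x unfolding N[symmetric] by presburger
  qed
  then consider "x = 1" | "x = 2 ^ Suc i - 1" | "3 \<le> x" "x \<le> 2 ^ Suc i - 3" by blast
  then show ?case
  proof cases
    case 1
    then show ?thesis using Rset_column_one_strip[OF valid] Suc.prems(2) x(3) w by simp
  next
    case 2
    then show ?thesis using Rset_row_one_strip[OF valid] Suc.prems(2) x(2) w by simp
  next
    case 3
    obtain k where k: "x = 2 * k + 1" using x(1) by (metis oddE)
    have "1 \<le> k" "k \<le> 2 ^ i - 2" using 3 k by simp_all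
    from Rset_skeleton_inner_strip[OF valid this _ Suc.prems(2) Suc.IH]
    show ?thesis using w k by simp
  qed
qed

lemma Rset_boundary_strip:
  assumes valid: "valid_parent par" and "0 \<le> x" "0 \<le> y" "x \<le> 1 \<or> y \<le> 1"
  shows "Rset par (x, y) \<subseteq> strip (real_of_int x / real_of_int (x + y))"
proof -
  have box: "Rset par (x, y) \<subseteq> {0..x} \<times> {0..y}"
    using Rset_subset_box[OF valid, of "(x, y)"] assms unfolding Q1_def by simp
  have self: "offset (real_of_int x / real_of_int (x + y)) (x, y) = 0" if "x + y \<noteq> 0"
    using offset_self[of "(x, y)"] that unfolding diag_def by simp
  consider "x = 0" | "y = 0" "1 \<le> x" | "x = 1" "1 \<le> y" | "y = 1" "1 \<le> x"
    using assms by linarith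
  then show ?thesis
  proof cases
    case 1
    then show ?thesis using box unfolding strip_def offset_def by auto
  next
    case 2
    then show ?thesis using box unfolding strip_def offset_def diag_def by auto
  next
    case 3
    then show ?thesis using Rset_column_one_strip[OF valid] self assms(3) by simp
  next
    case 4
    then show ?thesis using Rset_row_one_strip[OF valid] self by simp
  qed
qed

lemma Rset_case3_strip:
  assumes valid: "valid_parent par" and "2 \<le> x" "is_pow2 (x + 2)"
  shows "Rset par (x, 2) \<subseteq> strip (real_of_int x / real_of_int (x + 2))"
proof -
  define a where "a = real_of_int x / real_of_int (x + 2)"
  have "offset a (x, 1) = a" and "offset a (x, 2) = 0"
    using assms(2) unfolding a_def offset_pair by (simp_all add: field_simps)
  moreover have "0 \<le> a" "a \<le> 1" using assms(2) unfolding a_def by simp_all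
  ultimately have "Rset par (x, 1) \<subseteq> strip a" "(x, 2) \<in> strip a"
    using Rset_row_one_strip[OF valid, of x a] assms(2) unfolding strip_def by simp_all
  then show ?thesis
    using Rset_parent[of "(x, 2)" par] parent_second_row_pow2[OF assms] unfolding orig_def a_def by simp
qed

lemma Rset_case4_strip:
  assumes valid: "valid_parent par" and x: "2 \<le> x" and y: "2 \<le> y"
    and not3: "\<not> (y = 2 \<and> is_pow2 (x + y))" and pow: "is_pow2 (x + y - 1)"
  shows "Rset par (x, y) \<subseteq> strip (real_of_int x / real_of_int (x + y))"
proof -
  define a where "a = real_of_int x / real_of_int (x + y)"
  obtain r :: nat where r: "x + y - 1 = 2 ^ r" using pow unfolding is_pow2_def by auto
  have q: "par (x, y) \<in> {down_of (x, y), left_of (x, y)}"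
    using parent_interior[OF valid x y] unfolding down_of_def left_of_def by simp
  have p0: "offset a (x, y) = 0" using offset_self[of "(x, y)"] x y unfolding a_def diag_def by simp
  have "0 \<le> a" "a \<le> 1" using x y unfolding a_def by simp_all
  moreover have "offset a (par (x, y)) = a \<or> offset a (par (x, y)) = a - 1"
    using q p0 by (auto simp: offset_down offset_left)
  ultimately have "\<bar>offset a (par (x, y))\<bar> \<le> 1" by auto
  moreover have "par (x, y) \<in> skeleton r"
    using q r x y parent_odd_on_pow2_diag[OF valid x y not3 pow]
    unfolding skeleton_def down_of_def left_of_def diag_def by auto
  ultimately have "Rset par (par (x, y)) \<subseteq> strip a" by (intro Rset_skeleton_strip[OF valid])
  moreover have "(x, y) \<in> strip a" using p0 unfolding strip_def by simp
  ultimately show ?thesis using Rset_parent[of "(x, y)" par] x unfolding orig_def a_def by simp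
qed

lemma case5_level:
  assumes x: "2 \<le> x" and y: "2 \<le> y"
    and not3: "\<not> (y = 2 \<and> is_pow2 (x + y))" and not4: "\<not> is_pow2 (x + y - 1)"
  obtains i where "2 \<le> i" "2 ^ i + 1 < x + y" "x + y \<le> 2 ^ (i + 1)"
    "x + y \<le> 2 ^ i * x" "x + y < 2 ^ i * y"
proof -
  obtain i where i: "2 ^ i < x + y" "x + y \<le> 2 ^ (i + 1)"
    using ex_dyadic_level[of "x + y"] x y by auto
  have pow_Suc: "(2::int) ^ (i + 1) = 2 * 2 ^ i" by simp
  have "x + y \<noteq> 2 ^ i + 1" using not4 unfolding is_pow2_def by auto
  with i have D: "2 ^ i + 1 < x + y" by simp
  have i2: "2 \<le> i"
  proof (rule ccontr)
    assume "\<not> 2 \<le> i"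
    then have "(2::int) ^ (i + 1) \<le> 2 ^ 2" by (intro power_increasing) auto
    then have "x = 2" "y = 2" using i x y by simp_all
    moreover have "is_pow2 (2 + 2)" unfolding is_pow2_def by (rule exI[of _ 2]) simp
    ultimately show False using not3 by simp
  qed
  have "2 ^ i * 2 \<le> 2 ^ i * x" using x by (intro mult_left_mono) auto
  then have xK: "x + y \<le> 2 ^ i * x" using i pow_Suc by linarith
  have yK: "x + y < 2 ^ i * y"
  proof (cases "y = 2")
    case True
    then have "x + y \<noteq> 2 ^ (i + 1)" using not3 unfolding is_pow2_def by blast
    then show ?thesis using i True by simp
  next
    case False
    then have "2 ^ i * 3 \<le> 2 ^ i * y" using y by (intro mult_left_mono) auto
    moreover have "(0::int) < 2 ^ i" by simp
    ultimately show ?thesis using i pow_Suc by linarith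
  qed
  show thesis using that[OF i2 D i(2) xK yK] .
qed

lemma case5_zone:
  assumes "2 \<le> x" "2 \<le> y" "\<not> (y = 2 \<and> is_pow2 (x + y))" "\<not> is_pow2 (x + y - 1)"
  obtains i j where "2 \<le> i" "1 \<le> j" "j \<le> 2 ^ i - 2" "2 ^ i + 1 < x + y" "x + y \<le> 2 ^ (i + 1)"
    "real_of_int j \<le> 2 ^ i * (real_of_int x / real_of_int (x + y))"
    "2 ^ i * (real_of_int x / real_of_int (x + y)) < real_of_int j + 1"
proof -
  define a where "a = real_of_int x / real_of_int (x + y)"
  obtain i where i: "2 \<le> i" "2 ^ i + 1 < x + y" "x + y \<le> 2 ^ (i + 1)"
    and xK: "x + y \<le> 2 ^ i * x" and yK: "x + y < 2 ^ i * y"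
    using case5_level[OF assms] by blast
  define j where "j = \<lfloor>2 ^ i * a\<rfloor>"
  have ja: "real_of_int j \<le> 2 ^ i * a" "2 ^ i * a < real_of_int j + 1"
    unfolding j_def by linarith+
  have "real_of_int (x + y) \<le> real_of_int (2 ^ i * x)" using xK by (simp only: of_int_le_iff)
  then have "1 \<le> 2 ^ i * a" using assms(1,2) unfolding a_def by (simp add: field_simps)
  then have j1: "1 \<le> j" unfolding j_def by (simp add: le_floor_iff)
  have "real_of_int (x + y) < real_of_int (2 ^ i * y)" using yK by (simp only: of_int_less_iff)
  then have "2 ^ i * real_of_int x < (2 ^ i - 1) * (real_of_int x + real_of_int y)"
    by (simp add: algebra_simps)
  then have "2 ^ i * a < 2 ^ i - 1" using assms(1,2) unfolding a_def by (simp add: field_simps)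
  then have "j < 2 ^ i - 1" unfolding j_def by (simp add: floor_less_iff)
  then have j2: "j \<le> 2 ^ i - 2" by simp
  show thesis using that[OF i(1) j1 j2 i(2,3)] ja unfolding a_def by simp
qed

lemma Rset_case5_strip:
  assumes valid: "valid_parent par" and "2 \<le> x" "2 \<le> y"
    and "\<not> (y = 2 \<and> is_pow2 (x + y))" "\<not> is_pow2 (x + y - 1)"
  shows "Rset par (x, y) \<subseteq> strip (real_of_int x / real_of_int (x + y))"
proof -
  define a where "a = real_of_int x / real_of_int (x + y)"
  obtain i j where i: "2 \<le> i" and j: "1 \<le> j" "j \<le> 2 ^ i - 2"
    and D: "2 ^ i + 1 < x + y" "x + y \<le> 2 ^ (i + 1)"
    and ja: "real_of_int j \<le> 2 ^ i * a" "2 ^ i * a < real_of_int j + 1"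
    by (rule case5_zone[OF assms(2-5), folded a_def])
  have "offset a (x, y) = 0" using offset_self[of "(x, y)"] D unfolding a_def diag_def by simp
  then have tracks: "tracks a (zone_mid i j) (x, y)" and strip: "(x, y) \<in> strip a"
    unfolding tracks_def strip_def by auto
  have diag: "2 ^ i < diag (x, y)" "diag (x, y) \<le> 2 ^ (i + 1)" using D unfolding diag_def by simp_all
  show ?thesis unfolding a_def[symmetric]
    by (rule Rset_zone_strip[OF valid i j ja(1) less_imp_le[OF ja(2)] ja _ Rset_skeleton_strip[OF valid]
      diag tracks strip]) simp
qed

lemma Rset_subset_strip:
  assumes valid: "valid_parent par" and "p \<in> Q1"
  shows "Rset par p \<subseteq> strip (real_of_int (fst p) / real_of_int (diag p))"
proof -
  obtain x y where p: "p = (x, y)" "0 \<le> x" "0 \<le> y" using assms(2) unfolding Q1_def by (cases p) auto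
  consider "x \<le> 1 \<or> y \<le> 1" | "2 \<le> x" "y = 2" "is_pow2 (x + 2)"
    | "2 \<le> x" "2 \<le> y" "\<not> (y = 2 \<and> is_pow2 (x + y))" "is_pow2 (x + y - 1)"
    | "2 \<le> x" "2 \<le> y" "\<not> (y = 2 \<and> is_pow2 (x + y))" "\<not> is_pow2 (x + y - 1)"
    by fastforce
  then have "Rset par (x, y) \<subseteq> strip (real_of_int x / real_of_int (x + y))"
  proof cases
    case 1
    then show ?thesis using Rset_boundary_strip[OF valid p(2,3)] by simp
  next
    case 2
    then show ?thesis using Rset_case3_strip[OF valid] by simp
  next
    case 3
    then show ?thesis using Rset_case4_strip[OF valid] by simp
  next
    case 4
    then show ?thesis using Rset_case5_strip[OF valid] by simp
  qed
  then show ?thesis unfolding p diag_def by simp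
qed

theorem lemma3:
  fixes par :: "int \<times> int \<Rightarrow> int \<times> int"
  assumes "valid_parent par"
    and "p \<in> Q1"
  shows "\<forall>v \<in> Rset par p. seg_dist v p < 3 / 2"
proof
  fix v assume v: "v \<in> Rset par p"
  then have "seg_dist v p \<le> \<bar>offset (real_of_int (fst p) / real_of_int (diag p)) v\<bar>"
    using seg_dist_le_offset[OF assms(2)] Rset_subset_box[OF assms] by blast
  also have "\<dots> < 3 / 2" using Rset_subset_strip[OF assms] v unfolding strip_def by blast
  finally show "seg_dist v p < 3 / 2" .
qed

end
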